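(* Let $X\in\Sigma^*$. Then: (Monotonicity) for all $\ell'\le\ell\le r\le r'$ in $[0,|X|]$, $\mathrm{selfed}(X[\ell\,.\,.\,r))\le\mathrm{selfed}(X[\ell'\,.\,.\,r'))$; (Sub-additivity) for every $m\in[0,|X|]$, $\mathrm{selfed}(X)\le\mathrm{selfed}(X[0\,.\,.\,m))+\mathrm{selfed}(X[m\,.\,.\,|X|))$; (Triangle inequality) for every $Y\in\Sigma^*$, $\mathrm{selfed}(Y)\le\mathrm{selfed}(X)+2\,\mathrm{ed}(X,Y)$.
   Context: $X[i\,.\,.\,j)$ denotes the fragment $X[i]\cdots X[j-1]$. $\mathrm{ed}$ is the unweighted (Levenshtein) edit distance. An alignment of $X$ onto $X$ is a monotone lattice path from $(0,0)$ to $(|X|,|X|)$ with steps $(1,0)$, $(0,1)$, $(1,1)$; its unweighted cost counts steps $(1,0)$, $(0,1)$, and steps $(x,y)\to(x+1,y+1)$ with $X[x]\ne X[y]$. A self-alignment of $X$ is such a path that contains no step $(x,x)\to(x+1,x+1)$ (i.e., never aligns a character to itself); $\mathrm{selfed}(X)$ is the minimum unweighted cost of a self-alignment of $X$. *)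

theory Defs
  imports Main
begin

definition frag :: "'a list \<Rightarrow> nat \<Rightarrow> nat \<Rightarrow> 'a list" where
  "frag X i j = take (j - i) (drop i X)"

definition is_step :: "nat \<times> nat \<Rightarrow> nat \<times> nat \<Rightarrow> bool" where
  "is_step p q \<longleftrightarrow> q = (fst p + 1, snd p) \<or> q = (fst p, snd p + 1) \<or> q = (fst p + 1, snd p + 1)"

definition alignment :: "'a list \<Rightarrow> 'a list \<Rightarrow> (nat \<times> nat) list \<Rightarrow> bool" where
  "alignment X Y P \<longleftrightarrow> P \<noteq> [] \<and> hd P = (0, 0) \<and> last P = (length X, length Y) \<and>
     (\<forall>i. Suc i < length P \<longrightarrow> is_step (P ! i) (P ! Suc i))"

definition step_cost :: "'a list \<Rightarrow> 'a list \<Rightarrow> nat \<times> nat \<Rightarrow> nat \<times> nat \<Rightarrow> nat" where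
  "step_cost X Y p q =
     (if q = (fst p + 1, snd p + 1) then (if X ! fst p \<noteq> Y ! snd p then 1 else 0) else 1)"

definition align_cost :: "'a list \<Rightarrow> 'a list \<Rightarrow> (nat \<times> nat) list \<Rightarrow> nat" where
  "align_cost X Y P = (\<Sum>i < length P - 1. step_cost X Y (P ! i) (P ! Suc i))"

definition ed :: "'a list \<Rightarrow> 'a list \<Rightarrow> nat" where
  "ed X Y = (LEAST c. \<exists>P. alignment X Y P \<and> align_cost X Y P = c)"

definition self_alignment :: "'a list \<Rightarrow> (nat \<times> nat) list \<Rightarrow> bool" where
  "self_alignment X P \<longleftrightarrow> alignment X X P \<and>
     (\<forall>i. Suc i < length P \<longrightarrow> \<not> (fst (P ! i) = snd (P ! i) \<and> P ! Suc i = (fst (P ! i) + 1, snd (P ! i) + 1)))"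

definition selfed :: "'a list \<Rightarrow> nat" where
  "selfed X = (LEAST c. \<exists>P. self_alignment X P \<and> align_cost X X P = c)"

end

theory Submission
  imports Defs
begin

text \<open>
  The diagonal steps of an alignment of X onto Y form a monotone matching M between the positions
  of X and of Y, and the alignment costs (|X| - |M|) + (|Y| - |M|) plus the number of mismatched
  pairs in M; conversely every monotone matching arises in this way. Self-alignments correspond
  to matchings without pairs (x, x). All three claims thereby become statements about matchings.
  Restricting an optimal matching of X to a window [l, r) loses at most l + (|X| - r) pairs, because
  by monotonicity no two pairs cross the boundary of a prefix (or suffix) in opposite directions.
  Optimal matchings of two strings, placed side by side, form a matching of their concatenation.
  Finally, if S is an optimal self-matching of X and A an optimal matching of X with Y, then the
  composite A^-1 O S O A is a self-matching of Y, and composition of matchings is subadditive in cost.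
\<close>

section \<open>Monotone matchings\<close>

definition monotone_matching :: "nat \<Rightarrow> nat \<Rightarrow> (nat \<times> nat) set \<Rightarrow> bool" where
  "monotone_matching n m M \<longleftrightarrow> M \<subseteq> {..<n} \<times> {..<m} \<and>
     (\<forall>a b c d. (a, b) \<in> M \<longrightarrow> (c, d) \<in> M \<longrightarrow> (a < c \<longleftrightarrow> b < d))"

definition mismatches :: "'a list \<Rightarrow> 'a list \<Rightarrow> (nat \<times> nat) set \<Rightarrow> (nat \<times> nat) set" where
  "mismatches X Y M = {p \<in> M. X ! fst p \<noteq> Y ! snd p}"

definition matching_cost :: "nat \<Rightarrow> nat \<Rightarrow> 'a list \<Rightarrow> 'a list \<Rightarrow> (nat \<times> nat) set \<Rightarrow> nat" where
  "matching_cost n m X Y M = (n - card M) + (m - card M) + card (mismatches X Y M)"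

lemma monotone_matchingD:
  assumes "monotone_matching n m M"
  shows monotone_matching_bounds: "(a, b) \<in> M \<Longrightarrow> a < n \<and> b < m"
    and monotone_matching_order: "(a, b) \<in> M \<Longrightarrow> (c, d) \<in> M \<Longrightarrow> a < c \<longleftrightarrow> b < d"
  using assms unfolding monotone_matching_def by blast+

lemma monotone_matching_fst_eq:
  "monotone_matching n m M \<Longrightarrow> (a, b) \<in> M \<Longrightarrow> (a, d) \<in> M \<Longrightarrow> b = d"
  by (metis monotone_matching_order less_irrefl nat_neq_iff)

lemma monotone_matching_snd_eq:
  "monotone_matching n m M \<Longrightarrow> (a, b) \<in> M \<Longrightarrow> (c, b) \<in> M \<Longrightarrow> a = c"
  by (metis monotone_matching_order less_irrefl nat_neq_iff)

lemma monotone_matching_finite: "monotone_matching n m M \<Longrightarrow> finite M"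
  unfolding monotone_matching_def by (meson finite_SigmaI finite_lessThan finite_subset)

lemma monotone_matching_inj_on_fst: "monotone_matching n m M \<Longrightarrow> inj_on fst M"
  by (auto simp: inj_on_def dest: monotone_matching_fst_eq)

lemma monotone_matching_inj_on_snd: "monotone_matching n m M \<Longrightarrow> inj_on snd M"
  by (auto simp: inj_on_def dest: monotone_matching_snd_eq)

lemma card_monotone_matching_le:
  assumes "monotone_matching n m M"
  shows "card M \<le> n" and "card M \<le> m"
proof -
  have "card M = card (fst ` M)" "card M = card (snd ` M)"
    using assms monotone_matching_inj_on_fst monotone_matching_inj_on_snd
    by (auto simp: card_image)
  moreover have "fst ` M \<subseteq> {..<n}" "snd ` M \<subseteq> {..<m}"
    using assms unfolding monotone_matching_def by auto
  ultimately show "card M \<le> n" "card M \<le> m"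
    by (metis card_lessThan card_mono finite_lessThan)+
qed

lemma finite_mismatches: "monotone_matching n m M \<Longrightarrow> finite (mismatches X Y M)"
  unfolding mismatches_def using monotone_matching_finite by simp

lemma monotone_matching_empty: "monotone_matching n m {}"
  by (simp add: monotone_matching_def)

lemma monotone_matching_mono:
  "monotone_matching n m M \<Longrightarrow> n \<le> n' \<Longrightarrow> m \<le> m' \<Longrightarrow> monotone_matching n' m' M"
  unfolding monotone_matching_def by fastforce

lemma monotone_matching_subset:
  "monotone_matching n m M \<Longrightarrow> M' \<subseteq> M \<Longrightarrow> M' \<subseteq> {..<n'} \<times> {..<m'} \<Longrightarrow> monotone_matching n' m' M'"
  unfolding monotone_matching_def by blast

lemma monotone_matching_insert:
  "monotone_matching n m M \<Longrightarrow> monotone_matching (Suc n) (Suc m) (insert (n, m) M)"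
  unfolding monotone_matching_def by fastforce

lemma monotone_matching_converse: "monotone_matching n m M \<Longrightarrow> monotone_matching m n (M\<inverse>)"
  unfolding monotone_matching_def by blast

lemma monotone_matching_relcomp:
  "monotone_matching n k A \<Longrightarrow> monotone_matching k m B \<Longrightarrow> monotone_matching n m (A O B)"
  unfolding monotone_matching_def by blast

lemma matching_cost_Suc_left:
  "monotone_matching n m M \<Longrightarrow> matching_cost (Suc n) m X Y M = Suc (matching_cost n m X Y M)"
  unfolding matching_cost_def using card_monotone_matching_le[of n m M] by simp

lemma matching_cost_Suc_right:
  "monotone_matching n m M \<Longrightarrow> matching_cost n (Suc m) X Y M = Suc (matching_cost n m X Y M)"
  unfolding matching_cost_def using card_monotone_matching_le[of n m M] by simp

lemma mismatches_insert:
  "mismatches X Y (insert p M) =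
     (if X ! fst p \<noteq> Y ! snd p then insert p (mismatches X Y M) else mismatches X Y M)"
  unfolding mismatches_def by auto

lemma mismatches_Un: "mismatches X Y (A \<union> B) = mismatches X Y A \<union> mismatches X Y B"
  unfolding mismatches_def by auto

lemma matching_cost_insert:
  assumes "monotone_matching n m M"
  shows "matching_cost (Suc n) (Suc m) X Y (insert (n, m) M) =
           matching_cost n m X Y M + (if X ! n \<noteq> Y ! m then 1 else 0)"
proof -
  have "(n, m) \<notin> M" using assms monotone_matching_bounds by blast
  moreover have "(n, m) \<notin> mismatches X Y M" using calculation unfolding mismatches_def by blast
  ultimately show ?thesis
    unfolding matching_cost_def
    using monotone_matching_finite[OF assms] finite_mismatches[OF assms, of X Y]
      card_monotone_matching_le[OF assms]
    by (auto simp: mismatches_insert)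
qed

lemma matching_cost_converse:
  "matching_cost m n Y X (M\<inverse>) = matching_cost n m X Y M"
proof -
  have "mismatches Y X (M\<inverse>) = (mismatches X Y M)\<inverse>" unfolding mismatches_def by auto
  then show ?thesis unfolding matching_cost_def by simp
qed

lemma card_relcomp_monotone_matching:
  assumes A: "monotone_matching n k A" and B: "monotone_matching k m B"
  shows "card A + card B \<le> k + card (A O B)"
proof -
  define A' where "A' = {p \<in> A. snd p \<in> fst ` B}"
  have injA: "inj_on fst A" "inj_on snd A" and injB: "inj_on fst B"
    using A B monotone_matching_inj_on_fst monotone_matching_inj_on_snd by blast+
  have finite: "finite A" "finite B"
    using A B monotone_matching_finite by blast+
  have "card (snd ` A \<inter> fst ` B) = card (snd ` A')"
    unfolding A'_def by (rule arg_cong[where f = card]) force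
  also have "\<dots> = card (fst ` A')"
    using inj_on_subset[OF injA(1)] inj_on_subset[OF injA(2)]
    by (simp add: A'_def card_image)
  also have "fst ` A' = fst ` (A O B)"
    unfolding A'_def by force
  also have "card (fst ` (A O B)) \<le> card (A O B)"
    using finite by (intro card_image_le) simp
  finally have "card (snd ` A \<inter> fst ` B) \<le> card (A O B)" .
  moreover have "card (snd ` A \<union> fst ` B) \<le> k"
  proof -
    have "snd ` A \<union> fst ` B \<subseteq> {..<k}" using A B unfolding monotone_matching_def by auto
    then show ?thesis by (metis card_lessThan card_mono finite_lessThan)
  qed
  moreover have "card (snd ` A) + card (fst ` B) = card (snd ` A \<union> fst ` B) + card (snd ` A \<inter> fst ` B)"
    using finite by (intro card_Un_Int) auto
  ultimately show ?thesis
    using injA(2) injB by (simp add: card_image)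
qed

lemma card_mismatches_relcomp:
  assumes A: "monotone_matching n k A" and B: "monotone_matching k m B"
  shows "card (mismatches X Z (A O B)) \<le> card (mismatches X Y A) + card (mismatches Y Z B)"
proof -
  have AB: "monotone_matching n m (A O B)" using monotone_matching_relcomp[OF A B] .
  define MA where "MA = {p \<in> A O B. fst p \<in> fst ` mismatches X Y A}"
  define MB where "MB = {p \<in> A O B. snd p \<in> snd ` mismatches Y Z B}"
  have "mismatches X Z (A O B) \<subseteq> MA \<union> MB"
    unfolding MA_def MB_def mismatches_def by force
  then have "card (mismatches X Z (A O B)) \<le> card (MA \<union> MB)"
    using monotone_matching_finite[OF AB] by (intro card_mono) (auto simp: MA_def MB_def)
  also have "\<dots> \<le> card MA + card MB" by (rule card_Un_le)
  finally have "card (mismatches X Z (A O B)) \<le> card MA + card MB" .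
  moreover have "card MA \<le> card (mismatches X Y A)"
  proof -
    have "card MA = card (fst ` MA)"
      using inj_on_subset[OF monotone_matching_inj_on_fst[OF AB]] by (simp add: MA_def card_image)
    also have "\<dots> \<le> card (fst ` mismatches X Y A)"
      using finite_mismatches[OF A] by (intro card_mono) (auto simp: MA_def)
    also have "\<dots> \<le> card (mismatches X Y A)"
      using finite_mismatches[OF A] by (rule card_image_le)
    finally show ?thesis .
  qed
  moreover have "card MB \<le> card (mismatches Y Z B)"
  proof -
    have "card MB = card (snd ` MB)"
      using inj_on_subset[OF monotone_matching_inj_on_snd[OF AB]] by (simp add: MB_def card_image)
    also have "\<dots> \<le> card (snd ` mismatches Y Z B)"
      using finite_mismatches[OF B] by (intro card_mono) (auto simp: MB_def)
    also have "\<dots> \<le> card (mismatches Y Z B)"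
      using finite_mismatches[OF B] by (rule card_image_le)
    finally show ?thesis .
  qed
  ultimately show ?thesis by linarith
qed

lemma matching_cost_relcomp_le:
  assumes A: "monotone_matching n k A" and B: "monotone_matching k m B"
  shows "matching_cost n m X Z (A O B) \<le> matching_cost n k X Y A + matching_cost k m Y Z B"
  using card_relcomp_monotone_matching[OF A B] card_mismatches_relcomp[OF A B, of X Z Y]
    card_monotone_matching_le[OF A] card_monotone_matching_le[OF B]
    card_monotone_matching_le[OF monotone_matching_relcomp[OF A B]]
  unfolding matching_cost_def by linarith

section \<open>Lattice paths and their diagonal steps\<close>

definition lattice_path :: "nat \<Rightarrow> nat \<Rightarrow> (nat \<times> nat) list \<Rightarrow> bool" where
  "lattice_path n m P \<longleftrightarrow> P \<noteq> [] \<and> hd P = (0, 0) \<and> last P = (n, m) \<and>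
     (\<forall>i. Suc i < length P \<longrightarrow> is_step (P ! i) (P ! Suc i))"

definition diagonal_steps :: "(nat \<times> nat) list \<Rightarrow> (nat \<times> nat) set" where
  "diagonal_steps P = (!) P ` {i. Suc i < length P \<and> P ! Suc i = (fst (P ! i) + 1, snd (P ! i) + 1)}"

lemma alignment_iff_lattice_path: "alignment X Y P \<longleftrightarrow> lattice_path (length X) (length Y) P"
  unfolding alignment_def lattice_path_def ..

lemma self_alignment_iff_lattice_path:
  "self_alignment X P \<longleftrightarrow> lattice_path (length X) (length X) P \<and> diagonal_steps P \<inter> Id = {}"
proof -
  have "diagonal_steps P \<inter> Id = {} \<longleftrightarrow> (\<forall>i. Suc i < length P \<longrightarrow>
          \<not> (fst (P ! i) = snd (P ! i) \<and> P ! Suc i = (fst (P ! i) + 1, snd (P ! i) + 1)))"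
    (is "?lhs \<longleftrightarrow> ?rhs")
  proof -
    have Id: "p \<notin> Id \<longleftrightarrow> fst p \<noteq> snd p" for p :: "nat \<times> nat" by (cases p) auto
    show "?lhs \<longleftrightarrow> ?rhs" unfolding diagonal_steps_def disjoint_iff Id by blast
  qed
  then show ?thesis unfolding self_alignment_def alignment_iff_lattice_path by blast
qed

lemma lattice_path_Nil: "\<not> lattice_path n m []"
  by (simp add: lattice_path_def)

lemma lattice_path_singleton: "lattice_path n m [q] \<longleftrightarrow> q = (0, 0) \<and> n = 0 \<and> m = 0"
  by (auto simp: lattice_path_def)

lemma lattice_path_snoc:
  assumes "P \<noteq> []"
  shows "lattice_path n m (P @ [q]) \<longleftrightarrow>
           lattice_path (fst (last P)) (snd (last P)) P \<and> is_step (last P) q \<and> q = (n, m)"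
proof -
  obtain k where k: "length P = Suc k" using assms by (cases P) auto
  have last: "P ! k = last P" using assms k by (simp add: last_conv_nth)
  have "(\<forall>i. Suc i < length (P @ [q]) \<longrightarrow> is_step ((P @ [q]) ! i) ((P @ [q]) ! Suc i)) \<longleftrightarrow>
        (\<forall>i. Suc i < length P \<longrightarrow> is_step (P ! i) (P ! Suc i)) \<and> is_step (last P) q"
    using k last by (auto simp: nth_append less_Suc_eq)
  then show ?thesis using assms by (auto simp: lattice_path_def)
qed

lemma align_cost_snoc:
  assumes "P \<noteq> []"
  shows "align_cost X Y (P @ [q]) = align_cost X Y P + step_cost X Y (last P) q"
proof -
  obtain k where k: "length P = Suc k" using assms by (cases P) auto
  have last: "P ! k = last P" using assms k by (simp add: last_conv_nth)
  have "(\<Sum>i<k. step_cost X Y ((P @ [q]) ! i) ((P @ [q]) ! Suc i)) =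
        (\<Sum>i<k. step_cost X Y (P ! i) (P ! Suc i))"
    using k by (intro sum.cong) (auto simp: nth_append)
  then show ?thesis using k last unfolding align_cost_def by (simp add: nth_append)
qed

lemma diagonal_steps_snoc:
  assumes "P \<noteq> []"
  shows "diagonal_steps (P @ [q]) =
           (if q = (fst (last P) + 1, snd (last P) + 1) then insert (last P) (diagonal_steps P)
            else diagonal_steps P)"
proof -
  obtain k where k: "length P = Suc k" using assms by (cases P) auto
  have last: "P ! k = last P" using assms k by (simp add: last_conv_nth)
  define I where "I = {i. Suc i < length P \<and> P ! Suc i = (fst (P ! i) + 1, snd (P ! i) + 1)}"
  have "{i. Suc i < length (P @ [q]) \<and>
            (P @ [q]) ! Suc i = (fst ((P @ [q]) ! i) + 1, snd ((P @ [q]) ! i) + 1)} =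
        I \<union> {i. i = k \<and> q = (fst (last P) + 1, snd (last P) + 1)}"
    unfolding I_def using k last by (auto simp: nth_append less_Suc_eq)
  moreover have "(!) (P @ [q]) ` I = (!) P ` I"
    unfolding I_def by (intro image_cong) (auto simp: nth_append)
  ultimately show ?thesis
    unfolding diagonal_steps_def I_def[symmetric] using k last
    by (auto simp: image_Un nth_append)
qed

lemma lattice_path_append_step:
  assumes "lattice_path n m P" "is_step (n, m) q"
  shows "lattice_path (fst q) (snd q) (P @ [q])"
    and "diagonal_steps (P @ [q]) =
           (if q = (n + 1, m + 1) then insert (n, m) (diagonal_steps P) else diagonal_steps P)"
proof -
  have "P \<noteq> []" "last P = (n, m)" using assms(1) by (auto simp: lattice_path_def)
  then show "lattice_path (fst q) (snd q) (P @ [q])"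
    and "diagonal_steps (P @ [q]) =
           (if q = (n + 1, m + 1) then insert (n, m) (diagonal_steps P) else diagonal_steps P)"
    using assms by (simp_all add: lattice_path_snoc diagonal_steps_snoc)
qed

lemma lattice_path_diagonal_steps:
  assumes "lattice_path n m P"
  shows "monotone_matching n m (diagonal_steps P) \<and>
         matching_cost n m X Y (diagonal_steps P) = align_cost X Y P"
  using assms
proof (induction P arbitrary: n m rule: rev_induct)
  case Nil
  then show ?case by (simp add: lattice_path_Nil)
next
  case (snoc q P)
  show ?case
  proof (cases "P = []")
    case True
    then show ?thesis using snoc.prems
      by (simp add: lattice_path_singleton diagonal_steps_def align_cost_def matching_cost_def
          mismatches_def monotone_matching_empty)
  next
    case False
    obtain a b where last: "last P = (a, b)" by force
    then have path: "lattice_path a b P" and step: "is_step (a, b) q" and q: "q = (n, m)"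
      using snoc.prems False by (auto simp: lattice_path_snoc)
    note IH = snoc.IH[OF path]
    have cost: "align_cost X Y (P @ [q]) = align_cost X Y P + step_cost X Y (a, b) q"
      using align_cost_snoc[OF False] last by simp
    note diag = lattice_path_append_step(2)[OF path step]
    from step consider "q = (Suc a, b)" | "q = (a, Suc b)" | "q = (Suc a, Suc b)"
      unfolding is_step_def by auto
    then show ?thesis
    proof cases
      case 1
      then show ?thesis using IH cost diag q
        by (auto simp: step_cost_def matching_cost_Suc_left intro: monotone_matching_mono)
    next
      case 2
      then show ?thesis using IH cost diag q
        by (auto simp: step_cost_def matching_cost_Suc_right intro: monotone_matching_mono)
    next
      case 3
      then show ?thesis using IH cost diag q
        by (simp add: step_cost_def matching_cost_insert monotone_matching_insert)
    qed
  qed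
qed

lemma monotone_matching_last_cases [consumes 2, case_names diagonal row column]:
  assumes M: "monotone_matching n m M" and "0 < n + m"
  obtains (diagonal) n' m' where "n = Suc n'" "m = Suc m'" "(n', m') \<in> M"
      "monotone_matching n' m' (M - {(n', m')})"
    | (row) n' where "n = Suc n'" "monotone_matching n' m M"
    | (column) m' where "m = Suc m'" "monotone_matching n m' M"
proof -
  note bounds = monotone_matching_bounds[OF M]
  have drop_row: "monotone_matching n' m M" if "n = Suc n'" "\<forall>b. (n', b) \<notin> M" for n'
  proof (rule monotone_matching_subset[OF M subset_refl], rule subsetI)
    fix p assume p: "p \<in> M"
    obtain a b where [simp]: "p = (a, b)" by force
    have "a \<noteq> n'" using p that(2) by auto
    then show "p \<in> {..<n'} \<times> {..<m}" using p bounds[of a b] that(1) by simp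
  qed
  have drop_column: "monotone_matching n m' M" if "m = Suc m'" "\<forall>a. (a, m') \<notin> M" for m'
  proof (rule monotone_matching_subset[OF M subset_refl], rule subsetI)
    fix p assume p: "p \<in> M"
    obtain a b where [simp]: "p = (a, b)" by force
    have "b \<noteq> m'" using p that(2) by auto
    then show "p \<in> {..<n} \<times> {..<m'}" using p bounds[of a b] that(1) by simp
  qed
  show thesis
  proof (cases n)
    case 0
    then obtain m' where "m = Suc m'" using \<open>0 < n + m\<close> by (cases m) auto
    moreover have "\<forall>a. (a, m') \<notin> M" using bounds 0 by blast
    ultimately show thesis using drop_column column by blast
  next
    case (Suc n')
    show thesis
    proof (cases m)
      case 0
      then have "\<forall>b. (n', b) \<notin> M" using bounds by blast
      then show thesis using Suc drop_row row by blast
    next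
      case (Suc m')
      consider "(n', m') \<in> M" | "\<forall>b. (n', b) \<notin> M" | b where "(n', b) \<in> M" "b \<noteq> m'"
        by blast
      then show thesis
      proof cases
        case 1
        have "M - {(n', m')} \<subseteq> {..<n'} \<times> {..<m'}"
        proof
          fix p assume p: "p \<in> M - {(n', m')}"
          obtain a b where [simp]: "p = (a, b)" by force
          have "a \<noteq> n'" "b \<noteq> m'"
            using p 1 monotone_matching_fst_eq[OF M] monotone_matching_snd_eq[OF M] by auto
          then show "p \<in> {..<n'} \<times> {..<m'}"
            using p bounds[of a b] \<open>n = Suc n'\<close> \<open>m = Suc m'\<close> by auto
        qed
        then have "monotone_matching n' m' (M - {(n', m')})"
          by (rule monotone_matching_subset[OF M Diff_subset])
        then show thesis by (rule diagonal[OF \<open>n = Suc n'\<close> \<open>m = Suc m'\<close> 1])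
      next
        case 2
        then show thesis by (rule row[OF \<open>n = Suc n'\<close> drop_row[OF \<open>n = Suc n'\<close>]])
      next
        case 3
        have "\<forall>a. (a, m') \<notin> M"
        proof (intro allI notI)
          fix a
          assume a: "(a, m') \<in> M"
          have "a \<noteq> n'"
          proof
            assume "a = n'"
            then have "m' = b" using monotone_matching_fst_eq[OF M] a 3(1) by simp
            then show False using 3(2) by simp
          qed
          then have "a < n'" using bounds[OF a] \<open>n = Suc n'\<close> by simp
          moreover have "b < m'" using bounds[OF 3(1)] 3(2) Suc by simp
          ultimately show False using monotone_matching_order[OF M a 3(1)] by simp
        qed
        then show thesis by (rule column[OF Suc drop_column[OF Suc]])
      qed
    qed
  qed
qed

lemma lattice_path_of_monotone_matching:
  "monotone_matching n m M \<Longrightarrow> \<exists>P. lattice_path n m P \<and> diagonal_steps P = M"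
proof (induction "n + m" arbitrary: n m M rule: less_induct)
  case less
  show ?case
  proof (cases "n + m = 0")
    case True
    then have "M = {}" using monotone_matching_bounds[OF less.prems] by fast
    then show ?thesis using True
      by (intro exI[of _ "[(0, 0)]"]) (simp add: lattice_path_singleton diagonal_steps_def)
  next
    case False
    then have pos: "0 < n + m" by simp
    have extend: "\<exists>P. lattice_path n m P \<and> diagonal_steps P = M"
      if "lattice_path a b P" "is_step (a, b) (n, m)"
        "diagonal_steps P \<union> (if (n, m) = (a + 1, b + 1) then {(a, b)} else {}) = M" for a b P
      using lattice_path_append_step[OF that(1,2)] that(3)
      by (intro exI[of _ "P @ [(n, m)]"]) auto
    from less.prems pos show ?thesis
    proof (cases rule: monotone_matching_last_cases)
      case (diagonal n' m')
      then obtain P where "lattice_path n' m' P" "diagonal_steps P = M - {(n', m')}"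
        using less.hyps[of n' m'] by auto
      then show ?thesis using diagonal by (intro extend) (auto simp: is_step_def)
    next
      case (row n')
      then obtain P where "lattice_path n' m P" "diagonal_steps P = M"
        using less.hyps[of n' m] by auto
      then show ?thesis using row by (intro extend) (auto simp: is_step_def)
    next
      case (column m')
      then obtain P where "lattice_path n m' P" "diagonal_steps P = M"
        using less.hyps[of n m'] by auto
      then show ?thesis using column by (intro extend) (auto simp: is_step_def)
    qed
  qed
qed

section \<open>Edit distances as matching costs\<close>

lemma selfed_le_matching_cost:
  assumes "monotone_matching (length X) (length X) M" "M \<inter> Id = {}"
  shows "selfed X \<le> matching_cost (length X) (length X) X X M"
proof -
  obtain P where P: "lattice_path (length X) (length X) P" "diagonal_steps P = M"
    using lattice_path_of_monotone_matching[OF assms(1)] by blast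
  then have "self_alignment X P" using assms(2) self_alignment_iff_lattice_path by blast
  then have "selfed X \<le> align_cost X X P" unfolding selfed_def by (blast intro: Least_le)
  also have "\<dots> = matching_cost (length X) (length X) X X M"
    using lattice_path_diagonal_steps[OF P(1), where X = X and Y = X] P(2) by simp
  finally show ?thesis .
qed

lemma selfed_optimal_matching:
  obtains M where "monotone_matching (length X) (length X) M" "M \<inter> Id = {}"
    "matching_cost (length X) (length X) X X M = selfed X"
proof -
  obtain P where "lattice_path (length X) (length X) P" "diagonal_steps P = {}"
    using lattice_path_of_monotone_matching[OF monotone_matching_empty] by blast
  then have ex: "\<exists>c P. self_alignment X P \<and> align_cost X X P = c"
    using self_alignment_iff_lattice_path by blast
  obtain Q where "self_alignment X Q" "align_cost X X Q = selfed X"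
    using LeastI_ex[OF ex] unfolding selfed_def by blast
  then show thesis
    using that lattice_path_diagonal_steps self_alignment_iff_lattice_path by metis
qed

lemma ed_optimal_matching:
  obtains M where "monotone_matching (length X) (length Y) M"
    "matching_cost (length X) (length Y) X Y M = ed X Y"
proof -
  obtain P where "lattice_path (length X) (length Y) P"
    using lattice_path_of_monotone_matching[OF monotone_matching_empty] by blast
  then have ex: "\<exists>c P. alignment X Y P \<and> align_cost X Y P = c"
    using alignment_iff_lattice_path by blast
  obtain Q where "alignment X Y Q" "align_cost X Y Q = ed X Y"
    using LeastI_ex[OF ex] unfolding ed_def by blast
  then show thesis
    using that lattice_path_diagonal_steps alignment_iff_lattice_path by metis
qed

lemma selfed_le_selfed_add_ed: "selfed Y \<le> selfed X + 2 * ed X Y"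
proof -
  obtain S where S: "monotone_matching (length X) (length X) S" "S \<inter> Id = {}"
    "matching_cost (length X) (length X) X X S = selfed X"
    by (rule selfed_optimal_matching)
  obtain A where A: "monotone_matching (length X) (length Y) A"
    "matching_cost (length X) (length Y) X Y A = ed X Y"
    by (rule ed_optimal_matching)
  have A': "monotone_matching (length Y) (length X) (A\<inverse>)"
    using monotone_matching_converse[OF A(1)] .
  \<comment> \<open>a pair (y, y) would come from (x, y), (x', y) in A, hence x = x', and (x, x) in S\<close>
  have "A\<inverse> O S O A \<inter> Id = {}"
    using S(2) monotone_matching_snd_eq[OF A(1)] by blast
  then have "selfed Y \<le> matching_cost (length Y) (length Y) Y Y (A\<inverse> O S O A)"
    using A' S(1) A(1) by (intro selfed_le_matching_cost monotone_matching_relcomp)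
  also have "\<dots> \<le> matching_cost (length Y) (length X) Y X (A\<inverse>) + matching_cost (length X) (length Y) X Y (S O A)"
    using A' monotone_matching_relcomp[OF S(1) A(1)] by (rule matching_cost_relcomp_le)
  also have "\<dots> \<le> ed X Y + (selfed X + ed X Y)"
    using matching_cost_relcomp_le[OF S(1) A(1), where X = X and Y = X and Z = Y] matching_cost_converse[where M = A and X = X and Y = Y] A(2) S(3)
    by simp
  finally show ?thesis by simp
qed

section \<open>Windows and concatenations\<close>

lemma card_incident_pairs_le:
  assumes "finite I" "inj_on fst M" "inj_on snd M"
    and no_crossing: "\<And>a b c d. (a, b) \<in> M \<Longrightarrow> (c, d) \<in> M \<Longrightarrow> a \<in> I \<Longrightarrow> b \<notin> I \<Longrightarrow> c \<notin> I \<Longrightarrow> d \<in> I \<Longrightarrow> False"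
  shows "card {p \<in> M. fst p \<in> I \<or> snd p \<in> I} \<le> card I"
proof -
  have "(\<forall>p \<in> M. fst p \<in> I \<longrightarrow> snd p \<in> I) \<or> (\<forall>p \<in> M. snd p \<in> I \<longrightarrow> fst p \<in> I)"
  proof (rule ccontr)
    assume "\<not> ?thesis"
    then obtain a b c d where "(a, b) \<in> M" "(c, d) \<in> M" "a \<in> I" "b \<notin> I" "c \<notin> I" "d \<in> I"
      by auto
    then show False by (rule no_crossing)
  qed
  then consider "\<forall>p \<in> M. fst p \<in> I \<longrightarrow> snd p \<in> I" | "\<forall>p \<in> M. snd p \<in> I \<longrightarrow> fst p \<in> I"
    by blast
  then show ?thesis
  proof cases
    case 1
    then have "{p \<in> M. fst p \<in> I \<or> snd p \<in> I} = {p \<in> M. snd p \<in> I}" by blast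
    moreover have "card {p \<in> M. snd p \<in> I} \<le> card I"
      using assms(1) inj_on_subset[OF assms(3)] by (intro card_inj_on_le[where f = snd]) auto
    ultimately show ?thesis by simp
  next
    case 2
    then have "{p \<in> M. fst p \<in> I \<or> snd p \<in> I} = {p \<in> M. fst p \<in> I}" by blast
    moreover have "card {p \<in> M. fst p \<in> I} \<le> card I"
      using assms(1) inj_on_subset[OF assms(2)] by (intro card_inj_on_le[where f = fst]) auto
    ultimately show ?thesis by simp
  qed
qed

lemma card_monotone_matching_le_window:
  assumes M: "monotone_matching n n M" and "l \<le> r" "r \<le> n"
  shows "card M \<le> card {p \<in> M. fst p \<in> {l..<r} \<and> snd p \<in> {l..<r}} + l + (n - r)"
proof -
  note inj = monotone_matching_inj_on_fst[OF M] monotone_matching_inj_on_snd[OF M]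
  note order = monotone_matching_order[OF M]
  define W where "W = {p \<in> M. fst p \<in> {l..<r} \<and> snd p \<in> {l..<r}}"
  define L where "L = {p \<in> M. fst p \<in> {..<l} \<or> snd p \<in> {..<l}}"
  define R where "R = {p \<in> M. fst p \<in> {r..<n} \<or> snd p \<in> {r..<n}}"
  have "card L \<le> card {..<l}"
    unfolding L_def
  proof (rule card_incident_pairs_le[OF finite_lessThan inj])
    fix a b c d assume "(a, b) \<in> M" "(c, d) \<in> M" "a \<in> {..<l}" "b \<notin> {..<l}" "c \<notin> {..<l}" "d \<in> {..<l}"
    then show False using order[of a b c d] by auto
  qed
  moreover have "card R \<le> card {r..<n}"
    unfolding R_def
  proof (rule card_incident_pairs_le[OF finite_atLeastLessThan inj])
    fix a b c d assume ab: "(a, b) \<in> M" and cd: "(c, d) \<in> M"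
      and "a \<in> {r..<n}" "b \<notin> {r..<n}" "c \<notin> {r..<n}" "d \<in> {r..<n}"
    then show False using order[OF cd ab] monotone_matching_bounds[OF M ab] monotone_matching_bounds[OF M cd]
      by auto
  qed
  moreover have "card M \<le> card W + card L + card R"
  proof -
    have "M \<subseteq> W \<union> L \<union> R"
    proof
      fix p assume p: "p \<in> M"
      then have "fst p < n" "snd p < n" using monotone_matching_bounds[OF M, of "fst p" "snd p"] by simp_all
      then show "p \<in> W \<union> L \<union> R" using p unfolding W_def L_def R_def by auto
    qed
    then have "card M \<le> card (W \<union> L \<union> R)"
      using monotone_matching_finite[OF M] by (intro card_mono) (auto simp: W_def L_def R_def)
    also have "\<dots> \<le> card W + card L + card R"
      by (meson card_Un_le add_right_mono order_trans)
    finally show ?thesis .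
  qed
  ultimately show ?thesis unfolding W_def by simp
qed

definition shift_pairs :: "nat \<Rightarrow> nat \<Rightarrow> (nat \<times> nat) set \<Rightarrow> (nat \<times> nat) set" where
  "shift_pairs i j M = (\<lambda>(a, b). (a + i, b + j)) ` M"

lemma shift_pairs_iff: "(a, b) \<in> shift_pairs i j M \<longleftrightarrow> i \<le> a \<and> j \<le> b \<and> (a - i, b - j) \<in> M"
  unfolding shift_pairs_def by (force simp: image_iff)

lemma finite_shift_pairs: "finite M \<Longrightarrow> finite (shift_pairs i j M)"
  unfolding shift_pairs_def by simp

lemma card_shift_pairs: "card (shift_pairs i j M) = card M"
  unfolding shift_pairs_def by (rule card_image) (auto simp: inj_on_def)

lemma monotone_matching_append:
  assumes A: "monotone_matching n m A" and B: "monotone_matching n' m' B"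
  shows "monotone_matching (n + n') (m + m') (A \<union> shift_pairs n m B)"
  unfolding monotone_matching_def
proof (intro conjI allI impI subsetI)
  fix p assume "p \<in> A \<union> shift_pairs n m B"
  then show "p \<in> {..<n + n'} \<times> {..<m + m'}"
    using monotone_matching_bounds[OF A] monotone_matching_bounds[OF B]
    by (cases p) (fastforce simp: shift_pairs_iff)
next
  fix a b c d assume ab: "(a, b) \<in> A \<union> shift_pairs n m B" and cd: "(c, d) \<in> A \<union> shift_pairs n m B"
  have before: "a' < c' \<and> b' < d'" if "(a', b') \<in> A" "(c', d') \<in> shift_pairs n m B" for a' b' c' d'
    using that monotone_matching_bounds[OF A] by (fastforce simp: shift_pairs_iff)
  show "a < c \<longleftrightarrow> b < d"
  proof (cases "(a, b) \<in> A"; cases "(c, d) \<in> A")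
    assume "(a, b) \<notin> A" "(c, d) \<notin> A"
    then have "(a - n, b - m) \<in> B" "(c - n, d - m) \<in> B" "n \<le> a" "n \<le> c" "m \<le> b" "m \<le> d"
      using ab cd by (auto simp: shift_pairs_iff)
    then show ?thesis using monotone_matching_order[OF B, of "a - n" "b - m" "c - n" "d - m"] by linarith
  qed (use ab cd before monotone_matching_order[OF A] in \<open>fastforce+\<close>)
qed

lemma matching_cost_append:
  assumes A: "monotone_matching (length X) (length Y) A"
    and B: "monotone_matching (length X') (length Y') B"
  shows "matching_cost (length X + length X') (length Y + length Y') (X @ X') (Y @ Y')
           (A \<union> shift_pairs (length X) (length Y) B) =
         matching_cost (length X) (length Y) X Y A + matching_cost (length X') (length Y') X' Y' B"
proof -
  let ?n = "length X" and ?m = "length Y"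
  note boundsA = monotone_matching_bounds[OF A] and boundsB = monotone_matching_bounds[OF B]
  have disjoint: "A \<inter> shift_pairs ?n ?m C = {}" for C
    using boundsA by (fastforce simp: shift_pairs_iff)
  have "mismatches (X @ X') (Y @ Y') (A \<union> shift_pairs ?n ?m B) =
        mismatches X Y A \<union> shift_pairs ?n ?m (mismatches X' Y' B)"
  proof -
    have "mismatches (X @ X') (Y @ Y') A = mismatches X Y A"
      using boundsA by (force simp: mismatches_def nth_append)
    moreover have "mismatches (X @ X') (Y @ Y') (shift_pairs ?n ?m B) = shift_pairs ?n ?m (mismatches X' Y' B)"
      by (auto simp: mismatches_def shift_pairs_def nth_append)
    ultimately show ?thesis by (simp add: mismatches_Un)
  qed
  moreover have "mismatches X Y A \<inter> shift_pairs ?n ?m (mismatches X' Y' B) = {}"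
    using disjoint unfolding mismatches_def by blast
  ultimately have "card (mismatches (X @ X') (Y @ Y') (A \<union> shift_pairs ?n ?m B)) =
             card (mismatches X Y A) + card (mismatches X' Y' B)"
    using finite_mismatches[OF A, of X Y] finite_mismatches[OF B, of X' Y']
    by (simp add: card_Un_disjoint card_shift_pairs finite_shift_pairs)
  moreover have "card (A \<union> shift_pairs ?n ?m B) = card A + card B"
    using monotone_matching_finite[OF A] monotone_matching_finite[OF B] disjoint[of B]
    by (simp add: card_Un_disjoint card_shift_pairs finite_shift_pairs)
  ultimately show ?thesis
    using card_monotone_matching_le[OF A] card_monotone_matching_le[OF B]
    unfolding matching_cost_def by simp
qed

lemma selfed_append_le: "selfed (X @ X') \<le> selfed X + selfed X'"
proof -
  obtain A where A: "monotone_matching (length X) (length X) A" "A \<inter> Id = {}"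
    "matching_cost (length X) (length X) X X A = selfed X"
    by (rule selfed_optimal_matching)
  obtain B where B: "monotone_matching (length X') (length X') B" "B \<inter> Id = {}"
    "matching_cost (length X') (length X') X' X' B = selfed X'"
    by (rule selfed_optimal_matching)
  let ?C = "A \<union> shift_pairs (length X) (length X) B"
  have "(a, a) \<notin> ?C" for a
    using A(2) B(2) by (auto simp: shift_pairs_iff)
  then have "?C \<inter> Id = {}" by auto
  then have "selfed (X @ X') \<le> matching_cost (length (X @ X')) (length (X @ X')) (X @ X') (X @ X') ?C"
    using monotone_matching_append[OF A(1) B(1)] by (intro selfed_le_matching_cost) simp_all
  also have "\<dots> = selfed X + selfed X'"
    using matching_cost_append[OF A(1) B(1)] A(3) B(3) by simp
  finally show ?thesis .
qed

lemma selfed_frag_le: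
  assumes "l \<le> r" "r \<le> length X"
  shows "selfed (frag X l r) \<le> selfed X"
proof -
  define n where "n = length X"
  define W where "W = frag X l r"
  have length_W: "length W = r - l" using assms by (simp add: W_def frag_def)
  have nth_W: "W ! a = X ! (a + l)" if "a < r - l" for a
    using that assms by (simp add: W_def frag_def add.commute)
  obtain M where M: "monotone_matching n n M" "M \<inter> Id = {}" "matching_cost n n X X M = selfed X"
    unfolding n_def by (rule selfed_optimal_matching)
  define M' where "M' = {(a, b). (a + l, b + l) \<in> M \<and> a < r - l \<and> b < r - l}"
  have M': "monotone_matching (r - l) (r - l) M'"
    unfolding monotone_matching_def M'_def using monotone_matching_order[OF M(1)]
    by auto (metis add_less_cancel_right)+
  moreover have "M' \<inter> Id = {}" using M(2) by (auto simp: M'_def)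
  ultimately have "selfed W \<le> matching_cost (r - l) (r - l) W W M'"
    using selfed_le_matching_cost length_W by metis
  moreover have "card (mismatches W W M') \<le> card (mismatches X X M)"
  proof -
    have "shift_pairs l l (mismatches W W M') \<subseteq> mismatches X X M"
      using nth_W by (auto simp: mismatches_def M'_def shift_pairs_def)
    then show ?thesis
      using finite_mismatches[OF M(1)] card_mono card_shift_pairs by metis
  qed
  moreover have "card M \<le> card M' + l + (n - r)"
  proof -
    have "shift_pairs l l M' = {p \<in> M. fst p \<in> {l..<r} \<and> snd p \<in> {l..<r}}"
      using assms(1) by (auto simp: M'_def shift_pairs_iff)
    then have "card M' = card {p \<in> M. fst p \<in> {l..<r} \<and> snd p \<in> {l..<r}}"
      using card_shift_pairs by metis
    then show ?thesis
      using card_monotone_matching_le_window[OF M(1) assms(1)] assms(2) by (simp add: n_def)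
  qed
  ultimately show ?thesis
    using card_monotone_matching_le[OF M'] card_monotone_matching_le[OF M(1)] M(3) assms
    unfolding W_def matching_cost_def n_def by linarith
qed

lemma frag_frag:
  assumes "l' \<le> l" "r \<le> r'"
  shows "frag (frag X l' r') (l - l') (r - l') = frag X l r"
  using assms unfolding frag_def by (simp add: drop_take min_def)

theorem lemma4p2:
  fixes X :: "'a list"
  shows "(\<forall>l' l r r'. l' \<le> l \<and> l \<le> r \<and> r \<le> r' \<and> r' \<le> length X \<longrightarrow>
            selfed (frag X l r) \<le> selfed (frag X l' r'))
       \<and> (\<forall>m. m \<le> length X \<longrightarrow> selfed X \<le> selfed (frag X 0 m) + selfed (frag X m (length X)))
       \<and> (\<forall>Y :: 'a list. selfed Y \<le> selfed X + 2 * ed X Y)"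
proof (intro conjI allI impI)
  fix l' l r r' assume bounds: "l' \<le> l \<and> l \<le> r \<and> r \<le> r' \<and> r' \<le> length X"
  then have "length (frag X l' r') = r' - l'" by (auto simp: frag_def min_def)
  then have "selfed (frag (frag X l' r') (l - l') (r - l')) \<le> selfed (frag X l' r')"
    using bounds by (intro selfed_frag_le) auto
  then show "selfed (frag X l r) \<le> selfed (frag X l' r')"
    using bounds frag_frag[of l' l r r' X] by simp
next
  fix m assume "m \<le> length X"
  show "selfed X \<le> selfed (frag X 0 m) + selfed (frag X m (length X))"
    using selfed_append_le[of "take m X" "drop m X"] by (simp add: frag_def)
next
  fix Y :: "'a list"
  show "selfed Y \<le> selfed X + 2 * ed X Y" by (rule selfed_le_selfed_add_ed)
qed

end
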